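(* Let $S=S_1S_2\cdots$ be as defined in the context. For almost every $n$ (all sufficiently large $n$), when $\mathrm{PPM}^*$ encodes $S$ sequentially, the bad zone of $S_n$, i.e. its first $2^n+2n$ bits, contributes in total at most $(2^n+2n)\log(n^5)$ bits to the encoding of $S$.
   Context: Strings are indexed from $0$; $x[i..j]$ is the substring from position $i$ to $j$; $x^j$ is $j$-fold concatenation; $\log$ is base $2$. de Bruijn strings: for $n\ge1$, a de Bruijn string of order $n$ is a binary string $x$ of length $2^n$ such that every $w\in\{0,1\}^n$ occurs exactly once as a substring of $x\cdot x[0..n-2]$. $db(n)$ is the lexicographically least one, produced by Martin's algorithm: start with $x=1^{n-1}$; while possible, append a bit (preferring $0$ over $1$) so that all length-$n$ substrings of $x$ remain distinct; then delete the prefix $1^{n-1}$. For $0\le i<2^n$, $db_i(n)=db(n)[i..2^n-1]\cdot db(n)[0..i-1]$. The sequence $S$: for $n\ge1$ write $n=2^st$ with $t$ odd, let $B_{n,i}=db_i(n)^t$ for $0\le i<2^s$, $S_n=B_{n,0}B_{n,1}\cdots B_{n,2^s-1}$, and $S=S_1S_2\cdots$. The $\mathrm{PPM}^*$ compressor (without exclusion, escape Method C) on binary input: after reading a prefix $x$, each stored context $c$ has, for each bit $b$, a frequency count equal to the number of occurrences of $cb$ in $x$, and an escape count equal to the number of distinct bits that have followed $c$ in $x$; deterministic means escape count $1$. The stored contexts are the empty context and, whenever a string $w$ occurs at least twice in $x$, the contexts $wb$ for each bit $b$ such that $wb$ occurs in $x$ followed by a further bit. Relevant contexts are stored contexts that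 are suffixes of $x$; the current context is the shortest deterministic relevant one, or the longest relevant one if none is deterministic. If the next bit $b$ has count $f>0$ in the current context it is encoded with probability $f/(T+e)$ ($T$ total bit count, $e$ escape count); otherwise an escape is encoded with probability $e/(T+e)$ and the next shorter relevant context becomes current; if $b$ is unseen even in the empty context, after the escape it is encoded with probability $1/2$. The model is then updated. The number of bits contributed by an encoded bit is $-\log$ of the product of the probabilities (escapes and symbol) used to encode it. *)

theory Defs
  imports Complex_Main "HOL-Computational_Algebra.Primes"
begin

text \<open>Binary strings are bool lists; False is the bit 0, True is the bit 1.\<close>

definition subwords :: "nat \<Rightarrow> bool list \<Rightarrow> bool list list" where
  "subwords n x = map (\<lambda>i. take n (drop i x)) [0..<Suc (length x) - n]"

definition martin_step :: "nat \<Rightarrow> bool list \<Rightarrow> bool list" where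
  "martin_step n x =
     (if distinct (subwords n (x @ [False])) then x @ [False]
      else if distinct (subwords n (x @ [True])) then x @ [True]
      else x)"

text \<open>At most 2^n bits can ever be appended (there are only 2^n words of length n),
  so 2^n iterations of the step reach the point where no bit can be appended.\<close>
definition db :: "nat \<Rightarrow> bool list" where
  "db n = drop (n - 1) ((martin_step n ^^ (2 ^ n)) (replicate (n - 1) True))"

definition db_rot :: "nat \<Rightarrow> nat \<Rightarrow> bool list" where
  "db_rot n i = drop i (db n) @ take i (db n)"

definition two_exp :: "nat \<Rightarrow> nat" where
  "two_exp n = multiplicity (2::nat) n"

definition odd_part :: "nat \<Rightarrow> nat" where
  "odd_part n = n div 2 ^ two_exp n"

definition Bblock :: "nat \<Rightarrow> nat \<Rightarrow> bool list" where
  "Bblock n i = concat (replicate (odd_part n) (db_rot n i))"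

definition Sblock :: "nat \<Rightarrow> bool list" where
  "Sblock n = concat (map (Bblock n) [0..<2 ^ two_exp n])"

text \<open>Position (0-based) in S at which S_n starts.\<close>
definition Soff :: "nat \<Rightarrow> nat" where
  "Soff n = length (concat (map Sblock [1..<n]))"

text \<open>The infinite sequence S = S_1 S_2 ...; bit k lies within S_1 ... S_(k+1).\<close>
definition Sseq :: "nat \<Rightarrow> bool" where
  "Sseq k = concat (map Sblock [1..<k + 2]) ! k"

section \<open>PPM* (no exclusion, escape method C) on binary input\<close>

definition occ :: "bool list \<Rightarrow> bool list \<Rightarrow> nat" where
  "occ x w = card {i. i + length w \<le> length x \<and> take (length w) (drop i x) = w}"

definition freq :: "bool list \<Rightarrow> bool list \<Rightarrow> bool \<Rightarrow> nat" where
  "freq x c b = occ x (c @ [b])"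

definition esc :: "bool list \<Rightarrow> bool list \<Rightarrow> nat" where
  "esc x c = card {b. occ x (c @ [b]) > 0}"

definition deterministic :: "bool list \<Rightarrow> bool list \<Rightarrow> bool" where
  "deterministic x c \<longleftrightarrow> esc x c = 1"

definition stored :: "bool list \<Rightarrow> bool list \<Rightarrow> bool" where
  "stored x c \<longleftrightarrow> c = [] \<or>
     (\<exists>w b. c = w @ [b] \<and> occ x w \<ge> 2 \<and> (\<exists>b'. occ x (c @ [b']) > 0))"

definition suffix_of_len :: "bool list \<Rightarrow> nat \<Rightarrow> bool list" where
  "suffix_of_len x l = drop (length x - l) x"

definition relevant_lens :: "bool list \<Rightarrow> nat list" where
  "relevant_lens x = filter (\<lambda>l. stored x (suffix_of_len x l)) [0..<Suc (length x)]"

definition current_len :: "bool list \<Rightarrow> nat" where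
  "current_len x =
     (let R = set (relevant_lens x);
          D = {l \<in> R. deterministic x (suffix_of_len x l)}
      in if D \<noteq> {} then Min D else Max R)"

definition ctx_chain :: "bool list \<Rightarrow> bool list list" where
  "ctx_chain x = map (suffix_of_len x)
     (rev (filter (\<lambda>l. l \<le> current_len x) (relevant_lens x)))"

fun enc_prob :: "bool list \<Rightarrow> bool \<Rightarrow> bool list list \<Rightarrow> real" where
  "enc_prob x b [] = 1 / 2"
| "enc_prob x b (c # cs) =
     (let f = real (freq x c b);
          T = real (freq x c False + freq x c True);
          e = real (esc x c)
      in if f > 0 then f / (T + e) else (e / (T + e)) * enc_prob x b cs)"

definition ppm_cost :: "bool list \<Rightarrow> bool \<Rightarrow> real" where
  "ppm_cost x b = - log 2 (enc_prob x b (ctx_chain x))"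

end

theory Submission
  imports Defs "HOL-Real_Asymp.Real_Asymp"
begin

text \<open>
  Martin's algorithm yields a de Bruijn string: in the graph whose nodes are the words of length
  \<open>m - 1\<close> and whose edges are the windows of length \<open>m\<close> written so far, in-degree and
  out-degree agree at every node except the start node \<open>1\<dots>1\<close>, so the algorithm can only get
  stuck there, and its preference for \<open>0\<close> then forces every window to have been written.

  For large \<open>n\<close>, one of \<open>S_(n-1)\<close>, \<open>S_(n-2)\<close> has odd part at least 2 and thus repeats a de
  Bruijn string twice, so every prefix of \<open>S\<close> ending in the bad zone of \<open>S_n\<close> contains every word
  of length \<open>n - 2\<close> followed by a further bit. Then every context shorter than \<open>n - 2\<close> has seen
  both bits, PPM* escapes at most once, and each bit is coded with probability at least
  \<open>1 / (M + 2)^2\<close>, where \<open>M\<close> bounds the number of occurrences of a word of length \<open>n - 3\<close> in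
  \<open>S_1 \<dots> S_n\<close>. As the blocks \<open>B_(m,i)\<close> are periodic, \<open>M = O(n^2 log n)\<close>, so that
  \<open>(M + 2)^2 \<le> n^5\<close> for large \<open>n\<close>.
\<close>

section \<open>Martin's algorithm produces a de Bruijn string\<close>

lemma card_bool_lists: "card {z :: bool list. length z = k} = 2 ^ k"
  using card_lists_length_eq[of "UNIV :: bool set" k] by simp

lemma finite_bool_lists: "finite {z :: bool list. length z = k}"
  using card_bool_lists[of k] by (metis card.infinite power_not_zero zero_neq_numeral)

lemma card_bool_set_le: "card (B :: bool set) \<le> 2"
  using card_mono[of "UNIV :: bool set" B] by simp

lemma length_subwords: "length (subwords m x) = Suc (length x) - m"
  by (simp add: subwords_def)

lemma nth_subwords: "i < Suc (length x) - m \<Longrightarrow> subwords m x ! i = take m (drop i x)"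
  by (simp add: subwords_def)

lemma set_subwords: "set (subwords m x) = {take m (drop i x) | i. i < Suc (length x) - m}"
  by (auto simp: subwords_def)

lemma set_subwords_subset: "set (subwords m x) \<subseteq> {z. length z = m}"
  unfolding set_subwords by auto

lemma subwords_snoc:
  assumes "m - 1 \<le> length x" "1 \<le> m"
  shows "subwords m (x @ [b]) = subwords m x @ [drop (length x - (m - 1)) x @ [b]]"
proof -
  have len: "Suc (length (x @ [b])) - m = Suc (Suc (length x) - m)" using assms by auto
  have "subwords m (x @ [b]) = map (\<lambda>i. take m (drop i (x @ [b]))) [0..<Suc (length x) - m] @
       [take m (drop (Suc (length x) - m) (x @ [b]))]"
    unfolding subwords_def len by simp
  also have "map (\<lambda>i. take m (drop i (x @ [b]))) [0..<Suc (length x) - m] = subwords m x"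
    unfolding subwords_def by (rule map_cong) auto
  also have "take m (drop (Suc (length x) - m) (x @ [b])) = drop (length x - (m - 1)) x @ [b]"
    using assms by auto
  finally show ?thesis .
qed

lemma length_subwords_le_if_distinct:
  assumes "distinct (subwords m x)" shows "length (subwords m x) \<le> 2 ^ m"
proof -
  have "length (subwords m x) = card (set (subwords m x))" using assms distinct_card by metis
  also have "\<dots> \<le> card {z :: bool list. length z = m}"
    by (rule card_mono[OF finite_bool_lists set_subwords_subset])
  finally show ?thesis by (simp add: card_bool_lists)
qed

text \<open>Every \<open>1\<close> was written because a \<open>0\<close> in its place would have repeated an earlier window.\<close>
definition martin_greedy :: "nat \<Rightarrow> bool list \<Rightarrow> bool" where
  "martin_greedy m x \<longleftrightarrow> (\<forall>i. m - 1 \<le> i \<and> i < length x \<and> x ! i \<longrightarrow>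
      (\<exists>q. q + m \<le> i \<and> take m (drop q x) = take (m - 1) (drop (i - (m - 1)) x) @ [False]))"

definition martin_inv :: "nat \<Rightarrow> bool list \<Rightarrow> bool" where
  "martin_inv m x \<longleftrightarrow>
     (\<exists>y. x = replicate (m - 1) True @ y) \<and> distinct (subwords m x) \<and> martin_greedy m x"

lemma martin_step_cases:
  "martin_step m x = x \<or>
   (martin_step m x = x @ [False] \<and> distinct (subwords m (x @ [False]))) \<or>
   (martin_step m x = x @ [True] \<and> distinct (subwords m (x @ [True])) \<and>
      \<not> distinct (subwords m (x @ [False])))"
  unfolding martin_step_def by auto

lemma martin_inv_length: "martin_inv m x \<Longrightarrow> m - 1 \<le> length x"
  unfolding martin_inv_def by auto

lemma martin_greedy_snoc:
  assumes m: "1 \<le> m" and inv: "martin_inv m x"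
    and not_False: "b \<Longrightarrow> \<not> distinct (subwords m (x @ [False]))"
  shows "martin_greedy m (x @ [b])"
  unfolding martin_greedy_def
proof (intro allI impI)
  have lx: "m - 1 \<le> length x" using martin_inv_length[OF inv] .
  have dx: "distinct (subwords m x)" and gx: "martin_greedy m x"
    using inv unfolding martin_inv_def by auto
  fix i assume h: "m - 1 \<le> i \<and> i < length (x @ [b]) \<and> (x @ [b]) ! i"
  show "\<exists>q. q + m \<le> i \<and>
      take m (drop q (x @ [b])) = take (m - 1) (drop (i - (m - 1)) (x @ [b])) @ [False]"
  proof (cases "i < length x")
    case True
    then have "x ! i" using h by (simp add: nth_append)
    with gx True h obtain q where q: "q + m \<le> i"
        "take m (drop q x) = take (m - 1) (drop (i - (m - 1)) x) @ [False]"
      unfolding martin_greedy_def by blast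
    moreover have "take (m - 1) (drop (i - (m - 1)) (x @ [b])) = take (m - 1) (drop (i - (m - 1)) x)"
      using True h by simp
    ultimately show ?thesis using True by auto
  next
    case False
    then have i: "i = length x" and b using h by (auto simp: nth_append)
    have "\<not> distinct (subwords m x @ [drop (length x - (m - 1)) x @ [False]])"
      using not_False[OF \<open>b\<close>] subwords_snoc[OF lx m] by simp
    then have "drop (length x - (m - 1)) x @ [False] \<in> set (subwords m x)" using dx by auto
    then obtain q where q: "q < Suc (length x) - m"
        "take m (drop q x) = drop (length x - (m - 1)) x @ [False]"
      unfolding set_subwords by auto
    then show ?thesis using m i lx by (intro exI[of _ q]) auto
  qed
qed

lemma martin_inv_step:
  assumes m: "1 \<le> m" and inv: "martin_inv m x"
  shows "martin_inv m (martin_step m x)"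
  using martin_step_cases[of m x]
proof (elim disjE conjE)
  assume "martin_step m x = x" then show ?thesis using inv by simp
next
  assume "martin_step m x = x @ [False]" "distinct (subwords m (x @ [False]))"
  then show ?thesis
    using martin_greedy_snoc[OF m inv, of False] inv unfolding martin_inv_def by auto
next
  assume "martin_step m x = x @ [True]" "distinct (subwords m (x @ [True]))"
    "\<not> distinct (subwords m (x @ [False]))"
  then show ?thesis
    using martin_greedy_snoc[OF m inv, of True] inv unfolding martin_inv_def by auto
qed

lemma martin_inv_iterate: "1 \<le> m \<Longrightarrow> martin_inv m ((martin_step m ^^ k) (replicate (m - 1) True))"
proof (induction k)
  case 0
  have "subwords m (replicate (m - 1) True) = []" unfolding subwords_def using 0 by simp
  then show ?case using 0 unfolding martin_inv_def martin_greedy_def by auto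
next
  case (Suc k)
  then show ?case using martin_inv_step by simp
qed

lemma martin_iterate_stuck_or_length:
  "martin_step m ((martin_step m ^^ k) x) = (martin_step m ^^ k) x \<or>
   length ((martin_step m ^^ k) x) = length x + k"
proof (induction k)
  case (Suc k)
  then show ?case using martin_step_cases[of m "(martin_step m ^^ k) x"] by auto
qed simp

definition martin_string :: "nat \<Rightarrow> bool list" where
  "martin_string m = (martin_step m ^^ 2 ^ m) (replicate (m - 1) True)"

lemma db_eq_drop_martin_string: "db m = drop (m - 1) (martin_string m)"
  unfolding db_def martin_string_def ..

lemma martin_string_inv: "1 \<le> m \<Longrightarrow> martin_inv m (martin_string m)"
  unfolding martin_string_def by (rule martin_inv_iterate)

text \<open>Only \<open>2 ^ m\<close> windows exist, so the \<open>2 ^ m\<close> iterations exhaust the algorithm.\<close>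
lemma martin_step_martin_string:
  assumes m: "1 \<le> m" shows "martin_step m (martin_string m) = martin_string m"
proof (rule ccontr)
  let ?X = "martin_string m"
  assume ne: "martin_step m ?X \<noteq> ?X"
  then have len: "length ?X = m - 1 + 2 ^ m"
    using martin_iterate_stuck_or_length[of m "2 ^ m" "replicate (m - 1) True"]
    unfolding martin_string_def by auto
  obtain b where "martin_step m ?X = ?X @ [b]" using ne martin_step_cases[of m ?X] by auto
  then have "martin_inv m (?X @ [b])" using martin_inv_step[OF m martin_string_inv[OF m]] by simp
  then have "length (subwords m (?X @ [b])) \<le> 2 ^ m"
    using length_subwords_le_if_distinct unfolding martin_inv_def by blast
  then show False using len m by (simp add: length_subwords)
qed

context
  fixes m :: nat
  assumes m: "1 \<le> m"
begin

abbreviation (input) "X \<equiv> martin_string m"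
abbreviation (input) "W \<equiv> set (subwords m (martin_string m))"

lemma length_martin_string_ge: "m - 1 \<le> length X"
  using martin_inv_length[OF martin_string_inv[OF m]] .

lemma distinct_subwords_martin_string: "distinct (subwords m X)"
  using martin_string_inv[OF m] unfolding martin_inv_def by auto

lemma martin_greedy_martin_string: "martin_greedy m X"
  using martin_string_inv[OF m] unfolding martin_inv_def by auto

lemma martin_string_prefix: "\<exists>y. X = replicate (m - 1) True @ y"
  using martin_string_inv[OF m] unfolding martin_inv_def by auto

lemma martin_string_final_extensions: "drop (length X - (m - 1)) X @ [b] \<in> W"
proof -
  have "\<not> distinct (subwords m (X @ [b]))"
    using martin_step_martin_string[OF m] unfolding martin_step_def by (cases b; auto split: if_splits)
  then show ?thesis using subwords_snoc[OF length_martin_string_ge m] distinct_subwords_martin_string by auto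
qed

definition node :: "nat \<Rightarrow> bool list" where "node i = take (m - 1) (drop i X)"

lemma window_eq_node_snoc: "i + m \<le> length X \<Longrightarrow> take m (drop i X) = node i @ [X ! (i + (m - 1))]"
proof -
  assume h: "i + m \<le> length X"
  have "take (Suc (m - 1)) (drop i X) = take (m - 1) (drop i X) @ [drop i X ! (m - 1)]"
    using h m by (intro take_Suc_conv_app_nth) auto
  then show ?thesis using m h unfolding node_def by simp
qed

lemma window_eq_Cons_node: "i + m \<le> length X \<Longrightarrow> take m (drop i X) = X ! i # node (Suc i)"
proof -
  assume h: "i + m \<le> length X"
  have "drop i X = X ! i # drop (Suc i) X" using h m Cons_nth_drop_Suc[of i X] by auto
  then show ?thesis using m unfolding node_def by (cases m) auto
qed

lemma mem_windows: "z \<in> W \<longleftrightarrow> (\<exists>i. i + m \<le> length X \<and> take m (drop i X) = z)"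
proof -
  have "(i < Suc (length X) - m) = (i + m \<le> length X)" for i using m by auto
  then show ?thesis unfolding set_subwords by auto
qed

lemma window_inj:
  assumes "i + m \<le> length X" "i' + m \<le> length X" "take m (drop i X) = take m (drop i' X)"
  shows "i = i'"
proof -
  have l: "i < length (subwords m X)" "i' < length (subwords m X)"
    using assms m by (auto simp: length_subwords)
  then have "subwords m X ! i = subwords m X ! i'" using assms by (simp add: nth_subwords length_subwords)
  then show "i = i'" using nth_eq_iff_index_eq[OF distinct_subwords_martin_string l] by simp
qed

definition node_pos :: "bool list \<Rightarrow> nat set" where
  "node_pos v = {i. i + (m - 1) \<le> length X \<and> node i = v}"

lemma finite_node_pos: "finite (node_pos v)"
  by (rule finite_subset[of _ "{..length X}"]) (auto simp: node_pos_def)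

lemma card_out_windows: "card {b. v @ [b] \<in> W} = card (node_pos v - {length X - (m - 1)})"
proof -
  let ?I = "{i. i + m \<le> length X \<and> node i = v}" and ?f = "\<lambda>i. X ! (i + (m - 1))"
  have pos: "node_pos v - {length X - (m - 1)} = ?I"
    unfolding node_pos_def using m length_martin_string_ge by auto
  have inj: "inj_on ?f ?I"
  proof (rule inj_onI)
    fix i i' assume "i \<in> ?I" "i' \<in> ?I" "?f i = ?f i'"
    then show "i = i'" using window_eq_node_snoc[of i] window_eq_node_snoc[of i'] window_inj[of i i']
      by auto
  qed
  have img: "?f ` ?I = {b. v @ [b] \<in> W}"
  proof
    show "?f ` ?I \<subseteq> {b. v @ [b] \<in> W}" using window_eq_node_snoc mem_windows by force
    show "{b. v @ [b] \<in> W} \<subseteq> ?f ` ?I"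
    proof
      fix b assume "b \<in> {b. v @ [b] \<in> W}"
      then obtain i where i: "i + m \<le> length X" "take m (drop i X) = v @ [b]"
        using mem_windows by auto
      then have "node i @ [?f i] = v @ [b]" using window_eq_node_snoc by simp
      then show "b \<in> ?f ` ?I" using i by (auto intro!: image_eqI[of _ _ i])
    qed
  qed
  show ?thesis unfolding pos img[symmetric] using card_image[OF inj] by simp
qed

lemma card_in_windows: "card {a. a # v \<in> W} = card (node_pos v - {0})"
proof -
  let ?I = "{i. i + m \<le> length X \<and> node (Suc i) = v}" and ?f = "\<lambda>i. X ! i"
  have "node_pos v - {0} = Suc ` ?I"
  proof
    show "node_pos v - {0} \<subseteq> Suc ` ?I"
    proof
      fix i assume "i \<in> node_pos v - {0}"
      then show "i \<in> Suc ` ?I" unfolding node_pos_def using m by (cases i) auto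
    qed
    show "Suc ` ?I \<subseteq> node_pos v - {0}" unfolding node_pos_def using m by auto
  qed
  then have pos: "card (node_pos v - {0}) = card ?I" by (simp add: card_image)
  have inj: "inj_on ?f ?I"
  proof (rule inj_onI)
    fix i i' assume "i \<in> ?I" "i' \<in> ?I" "?f i = ?f i'"
    then show "i = i'" using window_eq_Cons_node[of i] window_eq_Cons_node[of i'] window_inj[of i i']
      by auto
  qed
  have img: "?f ` ?I = {a. a # v \<in> W}"
  proof
    show "?f ` ?I \<subseteq> {a. a # v \<in> W}" using window_eq_Cons_node mem_windows by force
    show "{a. a # v \<in> W} \<subseteq> ?f ` ?I"
    proof
      fix a assume "a \<in> {a. a # v \<in> W}"
      then obtain i where i: "i + m \<le> length X" "take m (drop i X) = a # v"
        using mem_windows by auto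
      then have "?f i # node (Suc i) = a # v" using window_eq_Cons_node by simp
      then show "a \<in> ?f ` ?I" using i by (auto intro!: image_eqI[of _ _ i])
    qed
  qed
  show ?thesis unfolding pos img[symmetric] using card_image[OF inj] by simp
qed

lemma node_0: "node 0 = replicate (m - 1) True"
  using martin_string_prefix unfolding node_def by auto

lemma node_last: "node (length X - (m - 1)) = drop (length X - (m - 1)) X"
  unfolding node_def using length_martin_string_ge by simp

text \<open>Both extensions of the final node are windows, so unless it is the start node, the final node
  occurs three times as the end of a window, exceeding the in-degree bound 2.\<close>
lemma martin_string_final_node: "drop (length X - (m - 1)) X = replicate (m - 1) True"
proof (rule ccontr)
  let ?E = "drop (length X - (m - 1)) X" and ?N = "length X - (m - 1)"
  assume ne: "?E \<noteq> replicate (m - 1) True"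
  have "{b. ?E @ [b] \<in> W} = UNIV" using martin_string_final_extensions by auto
  then have out: "card (node_pos ?E - {?N}) = 2" using card_out_windows[of ?E] by simp
  have N_in: "?N \<in> node_pos ?E" unfolding node_pos_def using node_last length_martin_string_ge by auto
  have "0 \<notin> node_pos ?E" unfolding node_pos_def using node_0 ne by auto
  then have "card {a. a # ?E \<in> W} = card (node_pos ?E)" using card_in_windows[of ?E] by simp
  also have "\<dots> = 3" using card_Suc_Diff1[OF finite_node_pos N_in] out by simp
  finally show False using card_bool_set_le[of "{a. a # ?E \<in> W}"] by linarith
qed

lemma in_out_balanced: "card {a. a # v \<in> W} = card {b. v @ [b] \<in> W}"
proof -
  let ?N = "length X - (m - 1)"
  have N: "node ?N = replicate (m - 1) True" using node_last martin_string_final_node by simp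
  show ?thesis
  proof (cases "v = replicate (m - 1) True")
    case True
    have "?N \<in> node_pos v" "0 \<in> node_pos v"
      unfolding node_pos_def using N node_0 length_martin_string_ge True by auto
    then show ?thesis using card_in_windows card_out_windows by simp
  next
    case False
    then have "?N \<notin> node_pos v" "0 \<notin> node_pos v" unfolding node_pos_def using N node_0 by auto
    then show ?thesis using card_in_windows card_out_windows by simp
  qed
qed

lemma window_True_imp_False: "v @ [True] \<in> W \<Longrightarrow> v @ [False] \<in> W"
proof -
  assume "v @ [True] \<in> W"
  then obtain p where p: "p + m \<le> length X" "take m (drop p X) = v @ [True]"
    using mem_windows by auto
  then have v: "node p = v" and one: "X ! (p + (m - 1))" using window_eq_node_snoc by auto
  have "m - 1 \<le> p + (m - 1) \<and> p + (m - 1) < length X \<and> X ! (p + (m - 1))" using p(1) m one by auto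
  then obtain q where q: "q + m \<le> p + (m - 1)"
      "take m (drop q X) = take (m - 1) (drop p X) @ [False]"
    using martin_greedy_martin_string unfolding martin_greedy_def by fastforce
  moreover have "q + m \<le> length X" using q(1) p(1) by simp
  ultimately show ?thesis using v mem_windows unfolding node_def by blast
qed

text \<open>A missing edge \<open>u1\<close> propagates: the node \<open>tl u @ [1]\<close> then has in-degree at most 1,
  hence out-degree at most 1, and by greediness its missing edge is the one labelled \<open>1\<close>.\<close>
lemma window_shift_absent:
  assumes u: "u \<noteq> []" "u @ [True] \<notin> W"
  shows "(tl u @ [True]) @ [True] \<notin> W"
proof
  let ?v = "tl u @ [True]"
  assume a: "?v @ [True] \<in> W"
  have e: "hd u # ?v = u @ [True]" using u(1) by (cases u) auto
  have "hd u # ?v \<notin> W" unfolding e by (rule u(2))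
  then have "{a. a # ?v \<in> W} \<subseteq> UNIV - {hd u}" by auto
  then have "card {a. a # ?v \<in> W} \<le> 1"
    using card_mono[of "UNIV - {hd u}"] card_Diff_singleton[of "hd u" "UNIV :: bool set"] by simp
  moreover have "?v @ [b] \<in> W" for b using a window_True_imp_False[OF a] by (cases b) auto
  then have "{b. ?v @ [b] \<in> W} = UNIV" by auto
  ultimately show False using in_out_balanced[of ?v] by simp
qed

lemma window_ones_shift_absent:
  assumes v: "length v = m - 1" "v @ [True] \<notin> W" and k: "k \<le> m - 1"
  shows "(drop k v @ replicate k True) @ [True] \<notin> W"
  using k
proof (induction k)
  case 0 then show ?case using v by simp
next
  case (Suc k)
  have k: "k < length v" using Suc.prems v by simp
  have "(tl (drop k v @ replicate k True) @ [True]) @ [True] \<notin> W"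
    using Suc k by (intro window_shift_absent) auto
  moreover have "tl (drop k v @ replicate k True) @ [True] = drop (Suc k) v @ replicate (Suc k) True"
    using k by (simp add: drop_Suc tl_drop replicate_append_same)
  ultimately show ?case by simp
qed

lemma window_snoc_True: "length v = m - 1 \<Longrightarrow> v @ [True] \<in> W"
proof (rule ccontr)
  assume v: "length v = m - 1" "v @ [True] \<notin> W"
  then have "replicate (m - 1) True @ [True] \<notin> W"
    using window_ones_shift_absent[OF v, of "m - 1"] by simp
  then show False using martin_string_final_extensions martin_string_final_node by simp
qed

lemma set_subwords_martin_string: "W = {z. length z = m}"
proof
  show "W \<subseteq> {z. length z = m}" by (rule set_subwords_subset)
  show "{z. length z = m} \<subseteq> W"
  proof
    fix u :: "bool list" assume "u \<in> {z. length z = m}"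
    then have ne: "u \<noteq> []" and len: "length (butlast u) = m - 1" using m by auto
    have "butlast u @ [last u] \<in> W"
      using window_snoc_True[OF len] window_True_imp_False by (cases "last u") auto
    then show "u \<in> W" using append_butlast_last_id[OF ne] by simp
  qed
qed

lemma length_martin_string: "length X = 2 ^ m + (m - 1)"
proof -
  have "length (subwords m X) = card W" using distinct_card[OF distinct_subwords_martin_string] by simp
  then have "Suc (length X) - m = 2 ^ m" by (simp add: set_subwords_martin_string card_bool_lists length_subwords)
  then show ?thesis using m length_martin_string_ge by linarith
qed

end

section \<open>Cyclic windows of the de Bruijn string\<close>

definition cyc_window :: "bool list \<Rightarrow> nat \<Rightarrow> nat \<Rightarrow> bool list" where
  "cyc_window d p r = map (\<lambda>k. d ! ((p + k) mod length d)) [0..<r]"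

lemma length_cyc_window [simp]: "length (cyc_window d p r) = r"
  by (simp add: cyc_window_def)

lemma nth_cyc_window: "k < r \<Longrightarrow> cyc_window d p r ! k = d ! ((p + k) mod length d)"
  by (simp add: cyc_window_def)

lemma take_cyc_window: "r \<le> r' \<Longrightarrow> take r (cyc_window d p r') = cyc_window d p r"
  unfolding cyc_window_def by (simp add: take_map)

lemma mod_add_inj_on:
  fixes i P :: nat assumes i: "i < P" shows "inj_on (\<lambda>q. (q + i) mod P) {..<P}"
proof (rule inj_onI)
  fix q q' assume q: "q \<in> {..<P}" "q' \<in> {..<P}"
    and e: "(q + i) mod P = (q' + i) mod P"
  have unshift: "((x + i) mod P + (P - i)) mod P = x" if "x < P" for x
  proof -
    have "((x + i) mod P + (P - i)) mod P = (x + i + (P - i)) mod P" by (simp add: mod_add_left_eq)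
    also have "x + i + (P - i) = x + P" using i by simp
    finally show ?thesis using that by simp
  qed
  have "q = ((q + i) mod P + (P - i)) mod P" using unshift q by simp
  also have "\<dots> = q'" unfolding e using unshift q by simp
  finally show "q = q'" .
qed

context
  fixes m :: nat
  assumes m: "1 \<le> m"
begin

lemma length_db: "length (db m) = 2 ^ m"
  unfolding db_eq_drop_martin_string using length_martin_string[OF m] by simp

lemma nth_martin_string:
  assumes q: "q < length (martin_string m)"
  shows "martin_string m ! q = db m ! ((q + (2 ^ m - (m - 1))) mod 2 ^ m)"
proof -
  let ?P = "2 ^ m :: nat" and ?c = "m - 1"
  have cP: "?c < ?P" by (metis diff_le_self le_less_trans less_exp)
  obtain y where X: "martin_string m = replicate ?c True @ y" using martin_string_prefix[OF m] by auto
  have y: "db m = y" unfolding db_eq_drop_martin_string X by simp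
  have len: "length (martin_string m) = ?P + ?c" using length_martin_string[OF m] .
  show ?thesis
  proof (cases "?c \<le> q")
    case True
    have "q + (?P - ?c) = (q - ?c) + ?P" using True cP by simp
    moreover have "q - ?c < ?P" using q len True by linarith
    ultimately have "(q + (?P - ?c)) mod ?P = q - ?c" by simp
    then show ?thesis unfolding y using True X by (simp add: nth_append)
  next
    case False
    text \<open>Wrapping around: the last \<open>m - 1\<close> bits of \<open>db m\<close> are ones, like the first ones of
      the Martin string.\<close>
    have "drop ?P (martin_string m) = replicate ?c True"
      using martin_string_final_node[OF m] len by simp
    moreover have "martin_string m ! (q + ?P) = drop ?P (martin_string m) ! q"
      using False len by (simp add: add.commute)
    ultimately have "martin_string m ! (q + ?P) = True" using False by simp
    moreover have "y ! (q + (?P - ?c)) = martin_string m ! (q + ?P)"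
      using False cP X by (simp add: nth_append)
    moreover have "(q + (?P - ?c)) mod ?P = q + (?P - ?c)" using False cP by simp
    ultimately show ?thesis unfolding y using False X by (simp add: nth_append)
  qed
qed

lemma window_martin_string_eq_cyc_window:
  assumes q: "q + m \<le> length (martin_string m)"
  shows "take m (drop q (martin_string m)) = cyc_window (db m) ((q + (2 ^ m - (m - 1))) mod 2 ^ m) m"
proof (rule nth_equalityI)
  fix k assume "k < length (take m (drop q (martin_string m)))"
  then have k: "k < m" by simp
  have "take m (drop q (martin_string m)) ! k = db m ! ((q + k + (2 ^ m - (m - 1))) mod 2 ^ m)"
    using k q nth_martin_string by simp
  also have "\<dots> = cyc_window (db m) ((q + (2 ^ m - (m - 1))) mod 2 ^ m) m ! k"
  proof -
    have "(k + (q + (2 ^ m - (m - 1))) mod 2 ^ m) mod 2 ^ m = (q + k + (2 ^ m - (m - 1))) mod 2 ^ m"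
      by (simp add: mod_add_right_eq ac_simps)
    then show ?thesis using k by (simp add: nth_cyc_window length_db add.commute)
  qed
  finally show "take m (drop q (martin_string m)) ! k = \<dots>" .
qed (use q in simp)

lemma db_cyc_window_surj: "length u = m \<Longrightarrow> \<exists>p < 2 ^ m. cyc_window (db m) p m = u"
proof -
  assume "length u = m"
  then have "u \<in> set (subwords m (martin_string m))" using set_subwords_martin_string[OF m] by simp
  then obtain q where "q + m \<le> length (martin_string m)" "take m (drop q (martin_string m)) = u"
    using mem_windows[OF m] by auto
  then show ?thesis
    using window_martin_string_eq_cyc_window by (intro exI[of _ "(q + (2 ^ m - (m - 1))) mod 2 ^ m"]) simp
qed

text \<open>There are as many positions as words of length \<open>m\<close>.\<close>
lemma db_cyc_window_inj: "inj_on (\<lambda>p. cyc_window (db m) p m) {..<2 ^ m}"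
proof (rule eq_card_imp_inj_on)
  have "(\<lambda>p. cyc_window (db m) p m) ` {..<2 ^ m} = {z. length z = m}"
  proof (intro subset_antisym subsetI)
    fix u :: "bool list" assume "u \<in> {z. length z = m}"
    then obtain p where "p < 2 ^ m" "cyc_window (db m) p m = u" using db_cyc_window_surj by auto
    then show "u \<in> (\<lambda>p. cyc_window (db m) p m) ` {..<2 ^ m}" by force
  qed auto
  then show "card ((\<lambda>p. cyc_window (db m) p m) ` {..<2 ^ m}) = card {..<2 ^ m :: nat}"
    by (simp add: card_bool_lists)
qed simp

lemma length_db_rot: "length (db_rot m i) = 2 ^ m"
  unfolding db_rot_def using length_db by auto

lemma cyc_window_db_rot:
  assumes i: "i < 2 ^ m"
  shows "cyc_window (db_rot m i) q r = cyc_window (db m) ((q + i) mod 2 ^ m) r"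
proof (rule nth_equalityI)
  fix k assume "k < length (cyc_window (db_rot m i) q r)"
  then have k: "k < r" by simp
  let ?j = "(q + k) mod 2 ^ m"
  have "db_rot m i ! ?j = db m ! ((?j + i) mod 2 ^ m)"
  proof (cases "?j < 2 ^ m - i")
    case True
    then show ?thesis unfolding db_rot_def using i length_db by (simp add: nth_append add.commute)
  next
    case False
    have jP: "?j < 2 ^ m" by simp
    have "?j + i = (?j + i - 2 ^ m) + 2 ^ m" using False by auto
    moreover have "?j + i - 2 ^ m < 2 ^ m" using i jP by linarith
    ultimately have "(?j + i) mod 2 ^ m = ?j + i - 2 ^ m" by (metis mod_add_self2 mod_less)
    moreover have "?j + i - 2 ^ m < i" using jP False by linarith
    ultimately show ?thesis unfolding db_rot_def using False i length_db by (simp add: nth_append)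
  qed
  also have "(?j + i) mod 2 ^ m = ((q + i) mod 2 ^ m + k) mod 2 ^ m"
    by (metis add.commute add.left_commute mod_add_left_eq)
  finally show "cyc_window (db_rot m i) q r ! k = cyc_window (db m) ((q + i) mod 2 ^ m) r ! k"
    using k by (simp add: nth_cyc_window length_db length_db_rot)
qed simp

lemma db_rot_cyc_window_inj:
  assumes i: "i < 2 ^ m" shows "inj_on (\<lambda>q. cyc_window (db_rot m i) q m) {..<2 ^ m}"
proof -
  have "inj_on ((\<lambda>p. cyc_window (db m) p m) \<circ> (\<lambda>q. (q + i) mod 2 ^ m)) {..<2 ^ m}"
  proof (rule comp_inj_on)
    show "inj_on (\<lambda>p. cyc_window (db m) p m) ((\<lambda>q. (q + i) mod 2 ^ m) ` {..<2 ^ m})"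
      by (rule inj_on_subset[OF db_cyc_window_inj]) auto
  qed (rule mod_add_inj_on[OF i])
  then show ?thesis using cyc_window_db_rot[OF i] by (simp add: comp_def)
qed

end

section \<open>A lower bound on the PPM* coding probability\<close>

lemma finite_occ_positions: "finite {i. i + length w \<le> length x \<and> take (length w) (drop i x) = w}"
  by (rule finite_subset[of _ "{..length x}"]) auto

lemma occ_pos_iff: "0 < occ x w \<longleftrightarrow> (\<exists>i. i + length w \<le> length x \<and> take (length w) (drop i x) = w)"
  unfolding occ_def using finite_occ_positions[of w x] by (auto simp: card_gt_0_iff)

lemma occ_extend_left_le: "occ x (u @ v) \<le> occ x v"
proof -
  let ?A = "{i. i + length (u @ v) \<le> length x \<and> take (length (u @ v)) (drop i x) = u @ v}"
  let ?B = "{i. i + length v \<le> length x \<and> take (length v) (drop i x) = v}"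
  have "(\<lambda>i. i + length u) ` ?A \<subseteq> ?B"
  proof
    fix j assume "j \<in> (\<lambda>i. i + length u) ` ?A"
    then obtain i where i: "i \<in> ?A" "j = i + length u" by auto
    have "take (length v) (drop (length u) (take (length (u @ v)) (drop i x))) = v"
      using i(1) by simp
    then have "take (length v) (drop (i + length u) x) = v"
      by (simp add: drop_take add.commute)
    then show "j \<in> ?B" using i by simp
  qed
  moreover have "inj_on (\<lambda>i. i + length u) ?A" by (rule inj_onI) simp
  ultimately have "card ?A \<le> card ?B" using card_inj_on_le finite_occ_positions by blast
  then show ?thesis unfolding occ_def .
qed

lemma length_suffix_of_len: "l \<le> length x \<Longrightarrow> length (suffix_of_len x l) = l"
  by (simp add: suffix_of_len_def)

lemma occ_suffix_of_len_antimono: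
  assumes "l' \<le> l" "l \<le> length x"
  shows "occ x (suffix_of_len x l) \<le> occ x (suffix_of_len x l')"
proof -
  have "drop (l - l') (suffix_of_len x l) = suffix_of_len x l'"
    using assms by (simp add: suffix_of_len_def add.commute)
  then show ?thesis using occ_extend_left_le by (metis append_take_drop_id)
qed

lemma freq_sum_le_occ: "freq x c False + freq x c True \<le> occ x c"
proof -
  let ?S = "\<lambda>b. {i. i + length (c @ [b]) \<le> length x \<and> take (length (c @ [b])) (drop i x) = c @ [b]}"
  let ?C = "{i. i + length c \<le> length x \<and> take (length c) (drop i x) = c}"
  have "?S b \<subseteq> ?C" for b
  proof
    fix i assume "i \<in> ?S b"
    then have h: "i + length c + 1 \<le> length x" "take (Suc (length c)) (drop i x) = c @ [b]" by auto
    have "take (length c) (take (Suc (length c)) (drop i x)) = c" using h(2) by simp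
    then show "i \<in> ?C" using h(1) by (simp add: min_def)
  qed
  then have "card (?S False \<union> ?S True) \<le> card ?C"
    by (intro card_mono[OF finite_occ_positions]) auto
  moreover have "?S False \<inter> ?S True = {}" by auto
  then have "card (?S False \<union> ?S True) = card (?S False) + card (?S True)"
    by (intro card_Un_disjoint finite_occ_positions)
  ultimately show ?thesis unfolding freq_def occ_def by simp
qed

lemma freq_sum_suffix_le_occ:
  "l' \<le> l \<Longrightarrow> l \<le> length x \<Longrightarrow>
    freq x (suffix_of_len x l) False + freq x (suffix_of_len x l) True \<le> occ x (suffix_of_len x l')"
  by (rule le_trans[OF freq_sum_le_occ occ_suffix_of_len_antimono])

lemma esc_le_2: "esc x c \<le> 2"
  unfolding esc_def by (rule card_bool_set_le)

lemma freq_pos_if_esc_eq_2: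
  assumes "esc x c = 2" shows "0 < freq x c b"
proof -
  have "{b. 0 < occ x (c @ [b])} = UNIV"
    using assms unfolding esc_def by (intro card_subset_eq) auto
  then show ?thesis unfolding freq_def by auto
qed

lemma esc_ge_1_if_stored: "c \<noteq> [] \<Longrightarrow> stored x c \<Longrightarrow> 1 \<le> esc x c"
  unfolding stored_def esc_def by (auto simp: Suc_le_eq card_gt_0_iff)

lemma esc_eq_2_if_nondeterministic: "c \<noteq> [] \<Longrightarrow> stored x c \<Longrightarrow> \<not> deterministic x c \<Longrightarrow> esc x c = 2"
  using esc_ge_1_if_stored[of c x] esc_le_2[of x c] unfolding deterministic_def by linarith

lemma set_relevant_lens:
  "set (relevant_lens x) = {l. l \<le> length x \<and> stored x (suffix_of_len x l)}"
  unfolding relevant_lens_def by (auto simp: less_Suc_eq_le simp del: upt_Suc)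

lemma zero_relevant: "0 \<in> set (relevant_lens x)"
  unfolding set_relevant_lens by (simp add: stored_def suffix_of_len_def)

lemma current_len_cases:
  fixes x :: "bool list"
  defines "R \<equiv> set (relevant_lens x)"
  defines "D \<equiv> {l \<in> R. deterministic x (suffix_of_len x l)}"
  obtains "D \<noteq> {}" "current_len x = Min D" | "D = {}" "current_len x = Max R"
  unfolding current_len_def Let_def R_def D_def by metis

lemma current_len_relevant: "current_len x \<in> set (relevant_lens x)"
proof (rule current_len_cases[of x])
  let ?D = "{l \<in> set (relevant_lens x). deterministic x (suffix_of_len x l)}"
  assume "?D \<noteq> {}" "current_len x = Min ?D"
  then show ?thesis using Min_in[of ?D] by auto
next
  assume "current_len x = Max (set (relevant_lens x))"
  moreover have "set (relevant_lens x) \<noteq> {}" using zero_relevant[of x] by auto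
  ultimately show ?thesis using Max_in[of "set (relevant_lens x)"] by auto
qed

lemma current_len_le_if_deterministic:
  "l \<in> set (relevant_lens x) \<Longrightarrow> deterministic x (suffix_of_len x l) \<Longrightarrow> current_len x \<le> l"
  by (rule current_len_cases[of x]) auto

lemma current_len_ge:
  assumes "j \<in> set (relevant_lens x)"
    and "\<forall>l \<in> set (relevant_lens x). deterministic x (suffix_of_len x l) \<longrightarrow> j \<le> l"
  shows "j \<le> current_len x"
  by (rule current_len_cases[of x]) (use assms in auto)

lemma rev_filter_upt_le:
  assumes "c \<le> n" "P c"
  shows "rev (filter (\<lambda>l. l \<le> c) (filter P [0..<Suc n])) = c # rev (filter P [0..<c])"
proof -
  have "[0..<Suc n] = [0..<Suc c] @ [Suc c..<Suc n]"
    using upt_add_eq_append[of 0 "Suc c" "n - c"] assms(1) by simp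
  moreover have "filter (\<lambda>l. l \<le> c) (filter P [0..<Suc c]) = filter P [0..<Suc c]"
    by (rule filter_True) auto
  moreover have "filter (\<lambda>l. l \<le> c) (filter P [Suc c..<Suc n]) = []"
    by (rule filter_False) auto
  ultimately show ?thesis using assms(2) by simp
qed

lemma ctx_chain_eq:
  "ctx_chain x = suffix_of_len x (current_len x) #
     map (suffix_of_len x) (rev (filter (\<lambda>l. stored x (suffix_of_len x l)) [0..<current_len x]))"
proof -
  have "current_len x \<le> length x" "stored x (suffix_of_len x (current_len x))"
    using current_len_relevant[of x] unfolding set_relevant_lens by auto
  then have "rev (filter (\<lambda>l. l \<le> current_len x) (relevant_lens x)) =
      current_len x # rev (filter (\<lambda>l. stored x (suffix_of_len x l)) [0..<current_len x])"
    unfolding relevant_lens_def by (rule rev_filter_upt_le)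
  then show ?thesis unfolding ctx_chain_def by simp
qed

lemma rev_filter_upt_Cons:
  assumes "l0 < N" "P l0"
  shows "\<exists>l L. rev (filter P [0..<N]) = l # L \<and> P l \<and> l0 \<le> l \<and> l < N"
  using assms
proof (induction N)
  case (Suc N)
  show ?case
  proof (cases "P N")
    case False
    with Suc.prems have "l0 < N" by (cases "l0 = N") auto
    then show ?thesis using Suc.IH Suc.prems(2) False by auto
  qed (use Suc.prems in auto)
qed simp

lemma inverse_square_le:
  fixes M :: real assumes "0 \<le> M" shows "1 / (M + 2) ^ 2 \<le> 1 / (M + 2)"
proof -
  have "(M + 2) * 1 \<le> (M + 2) * (M + 2)" using assms by (intro mult_left_mono) auto
  then show ?thesis using assms by (intro divide_left_mono) (auto simp: power2_eq_square)
qed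

lemma enc_prob_Cons_ge_if_esc_eq_2:
  assumes "esc x c = 2" "real (freq x c False + freq x c True) \<le> M"
  shows "1 / (M + 2) \<le> enc_prob x b (c # cs)"
proof -
  have f: "1 \<le> real (freq x c b)" using freq_pos_if_esc_eq_2[OF assms(1), of b] by simp
  have "1 / (M + 2) \<le> 1 / (real (freq x c False + freq x c True) + 2)"
    using assms(2) by (intro divide_left_mono) auto
  also have "\<dots> \<le> real (freq x c b) / (real (freq x c False + freq x c True) + 2)"
    using f by (intro divide_right_mono) auto
  finally show ?thesis using assms(1) f by (simp add: Let_def)
qed

lemma enc_prob_Cons_ge_if_esc_eq_1:
  assumes "esc x c = 1" "real (freq x c False + freq x c True) \<le> M"
    and rest: "1 / (M + 2) \<le> enc_prob x b cs"
  shows "1 / (M + 2) ^ 2 \<le> enc_prob x b (c # cs)"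
proof -
  let ?T = "real (freq x c False + freq x c True)"
  have M: "0 \<le> M" using assms(2) by (meson of_nat_0_le_iff order_trans)
  have T: "1 / (M + 2) \<le> 1 / (?T + 1)" using assms(2) by (intro divide_left_mono) auto
  have sq: "1 / (M + 2) ^ 2 = (1 / (M + 2)) * (1 / (M + 2))" by (simp add: power2_eq_square)
  show ?thesis
  proof (cases "freq x c b = 0")
    case True
    have "(1 / (M + 2)) * (1 / (M + 2)) \<le> (1 / (?T + 1)) * enc_prob x b cs"
      using T rest M by (intro mult_mono) auto
    then show ?thesis using True assms(1) sq by (simp add: Let_def)
  next
    case False
    then have f: "1 \<le> real (freq x c b)" by simp
    have "1 / (M + 2) ^ 2 \<le> 1 / (M + 2)" using M by (rule inverse_square_le)
    also have "\<dots> \<le> 1 / (?T + 1)" by (rule T)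
    also have "\<dots> \<le> real (freq x c b) / (?T + 1)" using f by (intro divide_right_mono) auto
    finally show ?thesis using False assms(1) by (simp add: Let_def)
  qed
qed

lemma esc_eq_2_if_nondeterministic_relevant:
  assumes "l \<in> set (relevant_lens x)" "1 \<le> l" "\<not> deterministic x (suffix_of_len x l)"
  shows "esc x (suffix_of_len x l) = 2"
proof -
  have "l \<le> length x" "stored x (suffix_of_len x l)" using assms(1) unfolding set_relevant_lens by auto
  moreover have "suffix_of_len x l \<noteq> []" using assms(2) length_suffix_of_len[OF \<open>l \<le> length x\<close>] by auto
  ultimately show ?thesis using esc_eq_2_if_nondeterministic assms(3) by blast
qed

text \<open>The strict inequality makes every occurrence be followed by a further bit.\<close>
definition all_words_followed :: "bool list \<Rightarrow> nat \<Rightarrow> bool" where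
  "all_words_followed x j \<longleftrightarrow> (\<forall>w. length w = j \<longrightarrow> (\<exists>i. i + j < length x \<and> take j (drop i x) = w))"

context
  fixes x :: "bool list" and j :: nat
  assumes j: "2 \<le> j" and followed: "all_words_followed x j"
begin

lemma all_words_followed_length_gt: "j < length x"
  using followed unfolding all_words_followed_def by (auto dest: spec[of _ "replicate j False"])

lemma all_words_followed_prefix: "length w \<le> j \<Longrightarrow> \<exists>i. i + j < length x \<and> take (length w) (drop i x) = w"
proof -
  assume w: "length w \<le> j"
  obtain i where i: "i + j < length x" "take j (drop i x) = w @ replicate (j - length w) False"
    using followed[unfolded all_words_followed_def, rule_format, of "w @ replicate (j - length w) False"] w
    by auto
  have "take (length w) (take j (drop i x)) = w" unfolding i(2) by simp
  then show ?thesis using i(1) w by (auto simp: min_def)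
qed

lemma esc_suffix_eq_2_if_less:
  assumes "l < j" shows "esc x (suffix_of_len x l) = 2"
proof -
  let ?c = "suffix_of_len x l"
  have lc: "length ?c = l" using assms all_words_followed_length_gt by (simp add: length_suffix_of_len)
  have "0 < occ x (?c @ [b])" for b
  proof -
    obtain i where "i + j < length x" "take (length (?c @ [b])) (drop i x) = ?c @ [b]"
      using all_words_followed_prefix[of "?c @ [b]"] assms lc by auto
    then show ?thesis unfolding occ_pos_iff using assms lc by (intro exI[of _ i]) auto
  qed
  then have "{b. 0 < occ x (?c @ [b])} = UNIV" by auto
  then show ?thesis unfolding esc_def by simp
qed

lemma stored_suffix_if_le:
  assumes "l \<le> j" shows "stored x (suffix_of_len x l)"
proof (cases "l = 0")
  case True then show ?thesis by (simp add: stored_def suffix_of_len_def)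
next
  case False
  let ?c = "suffix_of_len x l"
  have lc: "length ?c = l" using assms all_words_followed_length_gt by (simp add: length_suffix_of_len)
  obtain i where i: "i + j < length x" "take l (drop i x) = ?c"
    using all_words_followed_prefix[of ?c] assms lc by auto
  let ?w = "butlast ?c"
  have "take (l - 1) (take l (drop i x)) = take (l - 1) ?c" unfolding i(2) ..
  then have in1: "take (length ?w) (drop i x) = ?w" using False by (simp add: butlast_conv_take lc min_def)
  have in2: "take (length ?w) (drop (length x - l) x) = ?w"
    using lc by (simp add: butlast_conv_take suffix_of_len_def)
  text \<open>The context \<open>?w\<close> occurs at \<open>i\<close> and, as a suffix of \<open>x\<close> minus one bit, at \<open>length x - l\<close>.\<close>
  have "card {i, length x - l} \<le> occ x ?w"
    unfolding occ_def using in1 in2 i(1) assms lc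
    by (intro card_mono[OF finite_occ_positions]) auto
  then have two: "2 \<le> occ x ?w" using i(1) assms by (simp split: if_splits)
  have "take (Suc l) (drop i x) = ?c @ [x ! (i + l)]"
    using i assms by (simp add: take_Suc_conv_app_nth)
  then have "0 < occ x (?c @ [x ! (i + l)])"
    unfolding occ_pos_iff using i(1) assms lc by (intro exI[of _ i]) simp
  moreover have "?c = ?w @ [last ?c]" using lc False by (intro append_butlast_last_id[symmetric]) auto
  ultimately show ?thesis unfolding stored_def using two by blast
qed

lemma relevant_if_le: "l \<le> j \<Longrightarrow> l \<in> set (relevant_lens x)"
  unfolding set_relevant_lens using stored_suffix_if_le all_words_followed_length_gt by simp

lemma current_len_ge_followed: "j \<le> current_len x"
proof (rule current_len_ge)
  show "j \<in> set (relevant_lens x)" by (rule relevant_if_le) simp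
  show "\<forall>l \<in> set (relevant_lens x). deterministic x (suffix_of_len x l) \<longrightarrow> j \<le> l"
  proof (intro ballI impI)
    fix l assume "deterministic x (suffix_of_len x l)"
    then show "j \<le> l" using esc_suffix_eq_2_if_less[of l] unfolding deterministic_def by (cases "j \<le> l") auto
  qed
qed

text \<open>After an escape from the current context comes the longest relevant context below it; since
  \<open>j - 1\<close> is relevant, it has length at least \<open>j - 1\<close>, and, being shorter than the current one,
  it is not deterministic.\<close>
lemma escape_context_esc_eq_2:
  assumes "deterministic x (suffix_of_len x (current_len x))"
  obtains l L where "rev (filter (\<lambda>l. stored x (suffix_of_len x l)) [0..<current_len x]) = l # L"
    "j - 1 \<le> l" "l \<le> length x" "esc x (suffix_of_len x l) = 2"
proof -
  let ?P = "\<lambda>l. stored x (suffix_of_len x l)" and ?cur = "current_len x"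
  have cur: "?cur \<in> set (relevant_lens x)" "j \<le> ?cur" "?cur \<le> length x"
    using current_len_relevant current_len_ge_followed unfolding set_relevant_lens by auto
  have "j - 1 < ?cur" "?P (j - 1)" using cur j stored_suffix_if_le by auto
  then obtain l L where l: "rev (filter ?P [0..<?cur]) = l # L" "?P l" "j - 1 \<le> l" "l < ?cur"
    using rev_filter_upt_Cons[of "j - 1" ?cur ?P] by blast
  have rel: "l \<in> set (relevant_lens x)" using l cur unfolding set_relevant_lens by auto
  have "\<not> deterministic x (suffix_of_len x l)"
  proof
    assume "deterministic x (suffix_of_len x l)"
    then show False using current_len_le_if_deterministic[OF rel] l(4) by simp
  qed
  then have "esc x (suffix_of_len x l) = 2"
    using rel l(3) j by (intro esc_eq_2_if_nondeterministic_relevant) auto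
  then show thesis using that l cur by simp
qed

lemma enc_prob_ctx_chain_ge:
  assumes M: "real (occ x (suffix_of_len x (j - 1))) \<le> M"
  shows "1 / (M + 2) ^ 2 \<le> enc_prob x b (ctx_chain x)"
proof -
  let ?cur = "current_len x"
  have T: "real (freq x (suffix_of_len x l) False + freq x (suffix_of_len x l) True) \<le> M"
    if "j - 1 \<le> l" "l \<le> length x" for l
    using freq_sum_suffix_le_occ[OF that] M by linarith
  have cur: "?cur \<in> set (relevant_lens x)" "j \<le> ?cur" "?cur \<le> length x"
    using current_len_relevant current_len_ge_followed unfolding set_relevant_lens by auto
  then have T_cur: "real (freq x (suffix_of_len x ?cur) False + freq x (suffix_of_len x ?cur) True) \<le> M"
    by (intro T) auto
  show ?thesis
  proof (cases "deterministic x (suffix_of_len x ?cur)")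
    case False
    then have "esc x (suffix_of_len x ?cur) = 2"
      using cur j by (intro esc_eq_2_if_nondeterministic_relevant) auto
    then have "1 / (M + 2) \<le> enc_prob x b (ctx_chain x)"
      unfolding ctx_chain_eq by (rule enc_prob_Cons_ge_if_esc_eq_2[OF _ T_cur])
    moreover have "0 \<le> M" using M of_nat_0_le_iff[of "occ x (suffix_of_len x (j - 1))"] by linarith
    ultimately show ?thesis using inverse_square_le by (meson order.trans)
  next
    case True
    then obtain l L where l: "rev (filter (\<lambda>l. stored x (suffix_of_len x l)) [0..<?cur]) = l # L"
        "j - 1 \<le> l" "l \<le> length x" "esc x (suffix_of_len x l) = 2"
      by (rule escape_context_esc_eq_2)
    then have "1 / (M + 2) \<le> enc_prob x b (suffix_of_len x l # map (suffix_of_len x) L)"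
      by (intro enc_prob_Cons_ge_if_esc_eq_2 T)
    moreover have "esc x (suffix_of_len x ?cur) = 1" using True unfolding deterministic_def .
    ultimately show ?thesis
      using enc_prob_Cons_ge_if_esc_eq_1[OF _ T_cur] unfolding ctx_chain_eq l(1) by simp
  qed
qed

lemma ppm_cost_le:
  assumes M: "real (occ x (suffix_of_len x (j - 1))) \<le> M"
  shows "ppm_cost x b \<le> 2 * log 2 (M + 2)"
proof -
  have M0: "0 \<le> M" using M by (meson of_nat_0_le_iff order_trans)
  have "log 2 (1 / (M + 2) ^ 2) \<le> log 2 (enc_prob x b (ctx_chain x))"
    using enc_prob_ctx_chain_ge[OF M] M0 by (intro log_mono) auto
  moreover have "log 2 (1 / (M + 2) ^ 2) = - (2 * log 2 (M + 2))"
    using M0 by (simp add: log_divide log_nat_power)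
  ultimately show ?thesis unfolding ppm_cost_def by linarith
qed

end

section \<open>The sequence S\<close>

lemma pow_two_exp_mult_odd_part: "1 \<le> m \<Longrightarrow> 2 ^ two_exp m * odd_part m = m"
  unfolding two_exp_def odd_part_def by (rule dvd_mult_div_cancel[OF multiplicity_dvd])

lemma odd_part_pos: "1 \<le> m \<Longrightarrow> 1 \<le> odd_part m"
  using pow_two_exp_mult_odd_part[of m] by (cases "odd_part m") auto

lemma pow_two_exp_le: "1 \<le> m \<Longrightarrow> 2 ^ two_exp m \<le> m"
  using pow_two_exp_mult_odd_part[of m] odd_part_pos[of m] by (metis mult_le_mono2 mult.right_neutral)

lemma two_exp_odd: "odd m \<Longrightarrow> two_exp m = 0"
  unfolding two_exp_def by (rule not_dvd_imp_multiplicity_0) simp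

lemma two_exp_double: "1 \<le> m \<Longrightarrow> two_exp (2 * m) = Suc (two_exp m)"
  unfolding two_exp_def by (rule multiplicity_times_same) auto

lemma length_concat_replicate: "length (concat (replicate t d)) = t * length d"
  by (induction t) auto

lemma length_Bblock: "1 \<le> m \<Longrightarrow> length (Bblock m i) = odd_part m * 2 ^ m"
  unfolding Bblock_def length_concat_replicate by (simp add: length_db_rot)

lemma length_Sblock: "1 \<le> m \<Longrightarrow> length (Sblock m) = m * 2 ^ m"
proof -
  assume m: "1 \<le> m"
  have "length (Sblock m) = 2 ^ two_exp m * (odd_part m * 2 ^ m)"
    unfolding Sblock_def length_concat by (simp add: length_Bblock[OF m] comp_def sum_list_triv)
  then show ?thesis using pow_two_exp_mult_odd_part[OF m] by (metis mult.assoc)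
qed

text \<open>\<open>Sprefix n\<close> is \<open>S_1 \<dots> S_(n-1)\<close>.\<close>
definition Sprefix :: "nat \<Rightarrow> bool list" where "Sprefix n = concat (map Sblock [1..<n])"

lemma Soff_eq_length_Sprefix: "Soff n = length (Sprefix n)"
  unfolding Soff_def Sprefix_def ..

lemma Sprefix_append: "1 \<le> a \<Longrightarrow> a \<le> b \<Longrightarrow> Sprefix b = Sprefix a @ concat (map Sblock [a..<b])"
  unfolding Sprefix_def using upt_add_eq_append[of 1 a "b - a"] by simp

lemma Sprefix_Suc: "1 \<le> n \<Longrightarrow> Sprefix (Suc n) = Sprefix n @ Sblock n"
  unfolding Sprefix_def by simp

lemma length_Sprefix_Suc: "1 \<le> n \<Longrightarrow> length (Sprefix (Suc n)) = length (Sprefix n) + n * 2 ^ n"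
  using Sprefix_Suc length_Sblock by simp

lemma length_Sprefix_ge: "n \<le> length (Sprefix (Suc n))"
proof (induction n)
  case (Suc n)
  have "0 < Suc n * 2 ^ Suc n" by simp
  then show ?case using length_Sprefix_Suc[of "Suc n"] Suc by linarith
qed simp

lemma length_Sprefix_mono: "1 \<le> a \<Longrightarrow> a \<le> b \<Longrightarrow> length (Sprefix a) \<le> length (Sprefix b)"
  using Sprefix_append[of a b] by simp

lemma nth_Sprefix_eq:
  assumes "i < length (Sprefix a)" "a \<le> b" shows "Sprefix b ! i = Sprefix a ! i"
proof (cases "a = 0")
  case True then show ?thesis using assms by (simp add: Sprefix_def)
next
  case False
  then show ?thesis using Sprefix_append[of a b] assms by (simp add: nth_append)
qed

lemma Sseq_eq_nth_Sprefix: "i < length (Sprefix n) \<Longrightarrow> Sseq i = Sprefix n ! i"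
proof -
  assume i: "i < length (Sprefix n)"
  have "i < length (Sprefix (i + 2))" using length_Sprefix_ge[of "Suc i"] by simp
  then have "Sprefix (i + 2) ! i = Sprefix n ! i"
    using i nth_Sprefix_eq[of i "i + 2" n] nth_Sprefix_eq[of i n "i + 2"] by (cases "i + 2 \<le> n") auto
  then show ?thesis unfolding Sseq_def Sprefix_def by simp
qed

lemma map_Sseq_upt: "k \<le> length (Sprefix n) \<Longrightarrow> map Sseq [0..<k] = take k (Sprefix n)"
  by (rule nth_equalityI) (auto simp: Sseq_eq_nth_Sprefix)

subsection \<open>Every word of length \<open>n - 2\<close> occurs before the bad zone of \<open>S_n\<close>\<close>

lemma nth_concat_replicate:
  assumes "length d = P" "a < t * P"
  shows "concat (replicate t d) ! a = d ! (a mod P)"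
  using assms(2)
proof (induction t arbitrary: a)
  case (Suc t)
  show ?case
  proof (cases "a < P")
    case False
    then have "concat (replicate t d) ! (a - P) = d ! ((a - P) mod P)" using Suc by simp
    moreover have "(a - P) mod P = a mod P" using False by (simp add: le_mod_geq)
    ultimately show ?thesis using False assms(1) by (simp add: nth_append)
  qed (use assms(1) in \<open>simp add: nth_append\<close>)
qed simp

lemma window_concat_replicate:
  assumes "length d = P" "0 < P" "p + r \<le> t * P"
  shows "take r (drop p (concat (replicate t d))) = cyc_window d (p mod P) r"
proof (rule nth_equalityI)
  fix k assume "k < length (take r (drop p (concat (replicate t d))))"
  then have k: "k < r" by simp
  then have "take r (drop p (concat (replicate t d))) ! k = concat (replicate t d) ! (p + k)"
    using assms by (simp add: length_concat_replicate)
  also have "\<dots> = d ! ((p + k) mod P)" using k assms by (intro nth_concat_replicate) auto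
  also have "\<dots> = cyc_window d (p mod P) r ! k" using k assms(1) by (simp add: nth_cyc_window mod_add_left_eq)
  finally show "take r (drop p (concat (replicate t d))) ! k = cyc_window d (p mod P) r ! k" .
qed (use assms in \<open>simp add: length_concat_replicate\<close>)

text \<open>With odd part at least 2, \<open>S_m\<close> starts with \<open>db(m) db(m)\<close>, which contains every cyclic
  window of \<open>db(m)\<close> as an ordinary one.\<close>
lemma Sblock_word_followed:
  assumes m: "1 \<le> m" and t: "2 \<le> odd_part m" and w: "length w \<le> m"
  shows "\<exists>q. q + length w < length (Sblock m) \<and> take (length w) (drop q (Sblock m)) = w"
proof -
  let ?P = "2 ^ m :: nat" and ?t = "odd_part m" and ?r = "length w"
  obtain p where p: "p < ?P" "cyc_window (db m) p m = w @ replicate (m - ?r) False"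
    using db_cyc_window_surj[OF m, of "w @ replicate (m - ?r) False"] w by auto
  have "[0..<2 ^ two_exp m] = 0 # [1..<2 ^ two_exp m]" by (simp add: upt_conv_Cons)
  then obtain z where Sz: "Sblock m = concat (replicate ?t (db m)) @ z"
    unfolding Sblock_def Bblock_def db_rot_def by simp
  have pr: "p + ?r < 2 * ?P" using p(1) w less_exp[of m] by linarith
  have "2 * ?P \<le> ?t * ?P" using t by simp
  then have prt: "p + ?r < ?t * ?P" using pr by linarith
  have "take ?r (drop p (concat (replicate ?t (db m)))) = cyc_window (db m) (p mod ?P) ?r"
    using prt length_db[OF m] by (intro window_concat_replicate) auto
  also have "\<dots> = w" using p take_cyc_window[of ?r m "db m" p] w by simp
  finally show ?thesis
    unfolding Sz using prt length_db[OF m] by (intro exI[of _ p]) (simp add: length_concat_replicate)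
qed

lemma odd_part_ge_2_near:
  assumes n: "5 \<le> n"
  obtains m where "m = n - 1 \<or> m = n - 2" "2 \<le> odd_part m"
proof (cases "2 \<le> odd_part (n - 1)")
  case False
  text \<open>Otherwise \<open>n - 1\<close> is a power of two, hence even, so \<open>n - 2\<close> is odd.\<close>
  then have "odd_part (n - 1) = 1" using odd_part_pos[of "n - 1"] n by linarith
  then have e: "2 ^ two_exp (n - 1) = n - 1" using pow_two_exp_mult_odd_part[of "n - 1"] n by simp
  have "two_exp (n - 1) \<noteq> 0"
  proof
    assume "two_exp (n - 1) = 0"
    then show False using e n by simp
  qed
  then have "even ((2::nat) ^ two_exp (n - 1))" by simp
  then have "even (n - 1)" by (simp only: e)
  then have "odd (n - 2)" using n by presburger
  then have "odd_part (n - 2) = n - 2" unfolding odd_part_def using two_exp_odd by simp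
  then show ?thesis using n that[of "n - 2"] by simp
qed (use that in blast)

text \<open>The bad zone of \<open>S_n\<close> lies within \<open>S_n\<close>, after the whole of \<open>S_(n-1)\<close> and \<open>S_(n-2)\<close>.\<close>
lemma bad_zone_all_words_followed:
  assumes n: "5 \<le> n" and k: "Soff n \<le> k" "k \<le> length (Sprefix (Suc n))"
  shows "all_words_followed (take k (Sprefix (Suc n))) (n - 2)"
  unfolding all_words_followed_def
proof (intro allI impI)
  fix w :: "bool list" assume w: "length w = n - 2"
  obtain m where m: "m = n - 1 \<or> m = n - 2" "2 \<le> odd_part m" using odd_part_ge_2_near[OF n] .
  have m1: "1 \<le> m" and mn: "m < n" and wm: "length w \<le> m" using m(1) n w by auto
  obtain q where q: "q + length w < length (Sblock m)" "take (length w) (drop q (Sblock m)) = w"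
    using Sblock_word_followed[OF m1 m(2) wm] by blast
  have "[m..<Suc n] = m # [Suc m..<Suc n]" using mn by (simp add: upt_conv_Cons)
  then have F: "Sprefix (Suc n) = Sprefix m @ Sblock m @ concat (map Sblock [Suc m..<Suc n])"
    using Sprefix_append[of m "Suc n"] m1 mn by simp
  have "length (Sprefix (Suc m)) \<le> length (Sprefix n)" using length_Sprefix_mono[of "Suc m" n] mn by simp
  then have before: "length (Sprefix m) + length (Sblock m) \<le> k"
    using Sprefix_Suc[OF m1] k(1) unfolding Soff_eq_length_Sprefix by simp
  let ?i = "length (Sprefix m) + q"
  have "take (n - 2) (drop ?i (take k (Sprefix (Suc n)))) = take (n - 2) (drop q (Sblock m))"
    using q(1) before w by (simp add: F drop_take take_take min_def)
  also have "\<dots> = w" using q(2) w by simp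
  finally show "\<exists>i. i + (n - 2) < length (take k (Sprefix (Suc n))) \<and>
      take (n - 2) (drop i (take k (Sprefix (Suc n)))) = w"
    using q(1) before w k(2) by (intro exI[of _ ?i]) auto
qed

subsection \<open>Occurrences of a word of length \<open>n - 3\<close> in \<open>S_1 \<dots> S_n\<close>\<close>

lemma take_drop_take: "i + r \<le> k \<Longrightarrow> take r (drop i (take k y)) = take r (drop i y)"
  by (simp add: drop_take take_take min_def)

lemma occ_take_le: "occ (take k y) w \<le> occ y w"
  unfolding occ_def
proof (intro card_mono[OF finite_occ_positions] subsetI)
  fix i assume "i \<in> {i. i + length w \<le> length (take k y) \<and> take (length w) (drop i (take k y)) = w}"
  then have "i + length w \<le> k" "i + length w \<le> length y" "take (length w) (drop i (take k y)) = w"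
    by auto
  then show "i \<in> {i. i + length w \<le> length y \<and> take (length w) (drop i y) = w}"
    by (simp add: take_drop_take)
qed

text \<open>An occurrence of \<open>w\<close> in \<open>b @ y\<close> lies in \<open>y\<close>, starts in the last \<open>r\<close> positions of \<open>b\<close>,
  or starts earlier, in which case \<open>b\<close> contains its prefix of length \<open>r\<close>.\<close>
lemma occ_append_le:
  assumes r: "r \<le> length w"
  shows "occ (b @ y) w \<le> occ b (take r w) + r + occ y w"
proof -
  let ?O = "{i. i + length w \<le> length (b @ y) \<and> take (length w) (drop i (b @ y)) = w}"
  let ?A = "{i. i + length (take r w) \<le> length b \<and> take (length (take r w)) (drop i b) = take r w}"
  let ?B = "{length b - r..<length b}"
  let ?Y = "{i. i + length w \<le> length y \<and> take (length w) (drop i y) = w}"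
  let ?C = "(\<lambda>i. i + length b) ` ?Y"
  have "?O \<subseteq> ?A \<union> ?B \<union> ?C"
  proof
    fix i assume "i \<in> ?O"
    then have h: "i + length w \<le> length (b @ y)" "take (length w) (drop i (b @ y)) = w" by blast+
    consider "i + r \<le> length b" | "i < length b" "length b < i + r" | "length b \<le> i" by linarith
    then show "i \<in> ?A \<union> ?B \<union> ?C"
    proof cases
      case 1
      have "take r (drop i b) = take r (drop i (b @ y))"
        using 1 by simp
      also have "\<dots> = take r (take (length w) (drop i (b @ y)))" by (simp only: take_take min.absorb1[OF r])
      also have "\<dots> = take r w" using h(2) by (rule arg_cong)
      finally show ?thesis using 1 r by simp
    next
      case 3
      then have "i - length b \<in> ?Y" using h by simp
      then show ?thesis using 3 by (auto intro!: image_eqI[of _ _ "i - length b"])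
    qed auto
  qed
  moreover have "finite ?A" "finite ?Y" by (rule finite_occ_positions)+
  ultimately have "card ?O \<le> card (?A \<union> ?B \<union> ?C)" by (intro card_mono) auto
  also have "\<dots> \<le> card (?A \<union> ?B) + card ?C" by (rule card_Un_le)
  also have "\<dots> \<le> card ?A + card ?B + card ?C" using card_Un_le[of ?A ?B] by linarith
  also have "card ?B \<le> r" by simp
  also have "card ?C \<le> card ?Y" by (rule card_image_le[OF finite_occ_positions])
  finally show ?thesis unfolding occ_def using r by simp
qed

lemma occ_concat_le:
  assumes "\<forall>q \<in> set qs. R q \<le> length w" "w \<noteq> []"
  shows "occ (concat (map B qs)) w \<le> (\<Sum>q \<leftarrow> qs. occ (B q) (take (R q) w) + R q)"
  using assms
proof (induction qs)
  case Nil
  then show ?case by (simp add: occ_def)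
next
  case (Cons q qs)
  have "occ (B q @ concat (map B qs)) w \<le> occ (B q) (take (R q) w) + R q + occ (concat (map B qs)) w"
    using Cons.prems by (intro occ_append_le) simp
  then show ?case using Cons by simp
qed

lemma card_lists_with_prefix:
  assumes "length u = r" "r \<le> m"
  shows "card {z :: bool list. length z = m \<and> take r z = u} = 2 ^ (m - r)"
proof -
  have "{z :: bool list. length z = m \<and> take r z = u} = (\<lambda>y. u @ y) ` {y. length y = m - r}"
  proof
    show "{z. length z = m \<and> take r z = u} \<subseteq> (\<lambda>y. u @ y) ` {y. length y = m - r}"
    proof
      fix z :: "bool list" assume "z \<in> {z. length z = m \<and> take r z = u}"
      then have "z = u @ drop r z" "length (drop r z) = m - r" by (auto simp: append_take_drop_id)
      then show "z \<in> (\<lambda>y. u @ y) ` {y. length y = m - r}" by blast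
    qed
  qed (use assms in auto)
  moreover have "inj_on (\<lambda>y. u @ y) {y. length y = m - r}" by (rule inj_onI) simp
  ultimately show ?thesis by (simp add: card_image card_bool_lists)
qed

text \<open>\<open>B_(m,i)\<close> has period \<open>2 ^ m\<close>, and within one period a word \<open>u\<close> of length \<open>r \<le> m\<close> starts
  only where a window of length \<open>m\<close> with prefix \<open>u\<close> starts; these windows are distinct.\<close>
lemma occ_Bblock_le:
  assumes m: "1 \<le> m" and i: "i < 2 ^ m" and u: "length u = r" "1 \<le> r" "r \<le> m"
  shows "occ (Bblock m i) u \<le> odd_part m * 2 ^ (m - r)"
proof -
  let ?P = "2 ^ m :: nat" and ?t = "odd_part m" and ?d = "db_rot m i"
  let ?O = "{p. p + length u \<le> length (Bblock m i) \<and> take (length u) (drop p (Bblock m i)) = u}"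
  let ?Q = "{q. q < ?P \<and> cyc_window ?d q r = u}"
  have sub: "(\<lambda>p. (p div ?P, p mod ?P)) ` ?O \<subseteq> {..<?t} \<times> ?Q"
  proof
    fix z assume "z \<in> (\<lambda>p. (p div ?P, p mod ?P)) ` ?O"
    then obtain p where p: "p \<in> ?O" "z = (p div ?P, p mod ?P)" by blast
    have h: "p + r \<le> ?t * ?P" "take r (drop p (concat (replicate ?t ?d))) = u"
      using p(1) u length_Bblock[OF m] unfolding Bblock_def by auto
    then have "p div ?P < ?t" using u(2) by (simp add: div_less_iff_less_mult)
    moreover have "cyc_window ?d (p mod ?P) r = u"
      using h window_concat_replicate[OF length_db_rot[OF m]] by simp
    ultimately show "z \<in> {..<?t} \<times> ?Q" using p(2) by simp
  qed
  have "inj_on (\<lambda>p. (p div ?P, p mod ?P)) ?O"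
    by (rule inj_onI) (metis prod.inject div_mult_mod_eq)
  then have "occ (Bblock m i) u = card ((\<lambda>p. (p div ?P, p mod ?P)) ` ?O)"
    unfolding occ_def by (simp add: card_image)
  also have "\<dots> \<le> card ({..<?t} \<times> ?Q)" using sub by (intro card_mono) auto
  also have "\<dots> = ?t * card ?Q" by (simp add: card_cartesian_product)
  also have "card ?Q \<le> 2 ^ (m - r)"
  proof -
    let ?Z = "{z :: bool list. length z = m \<and> take r z = u}"
    have "inj_on (\<lambda>q. cyc_window ?d q m) ?Q"
      using db_rot_cyc_window_inj[OF m i] by (rule inj_on_subset) auto
    then have "card ?Q = card ((\<lambda>q. cyc_window ?d q m) ` ?Q)" by (simp add: card_image)
    also have "\<dots> \<le> card ?Z"
    proof (rule card_mono)
      show "finite ?Z" using finite_bool_lists[of m] by (rule finite_subset[rotated]) auto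
      show "(\<lambda>q. cyc_window ?d q m) ` ?Q \<subseteq> ?Z" using take_cyc_window[OF u(3)] by auto
    qed
    finally show ?thesis using card_lists_with_prefix u by simp
  qed
  finally show ?thesis by simp
qed

lemma concat_concat: "concat (concat xss) = concat (map concat xss)"
  by (induction xss) auto

lemma sum_list_concat: "sum_list (concat xss) = sum_list (map sum_list xss)"
  by (induction xss) auto

definition two_part_sum :: "nat \<Rightarrow> nat" where
  "two_part_sum n = (\<Sum>m = 1..n. 2 ^ two_exp m)"

text \<open>Sum the bound of \<open>occ_Bblock_le\<close> (with \<open>m - r \<le> 3\<close>) and one boundary term \<open>n\<close> over the
  \<open>2 ^ two_exp m\<close> blocks \<open>B_(m,i)\<close> of every \<open>S_m\<close>.\<close>
lemma occ_Sprefix_le: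
  assumes n: "4 \<le> n" and w: "length w = n - 3"
  shows "occ (Sprefix (Suc n)) w \<le> 8 * n * n + n * two_part_sum n"
proof -
  define qs where "qs = concat (map (\<lambda>m. map (Pair m) [0..<2 ^ two_exp m]) [1..<Suc n])"
  define R where "R = (\<lambda>q :: nat \<times> nat. min (n - 3) (fst q))"
  have F: "concat (map (\<lambda>(m, i). Bblock m i) qs) = Sprefix (Suc n)"
    unfolding qs_def Sprefix_def Sblock_def map_concat by (simp add: comp_def concat_concat)
  have "occ (Sprefix (Suc n)) w \<le> (\<Sum>q \<leftarrow> qs. occ (case q of (m, i) \<Rightarrow> Bblock m i) (take (R q) w) + R q)"
    unfolding F[symmetric] using w n by (intro occ_concat_le) (auto simp: R_def)
  also have "\<dots> \<le> (\<Sum>q \<leftarrow> qs. 8 * odd_part (fst q) + n)"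
  proof (rule sum_list_mono)
    fix q assume "q \<in> set qs"
    then obtain m i where q: "q = (m, i)" "1 \<le> m" "m \<le> n" "i < 2 ^ two_exp m"
      unfolding qs_def by auto
    have "i < 2 ^ m" using q pow_two_exp_le[of m] less_exp[of m] by linarith
    then have "occ (Bblock m i) (take (R q) w) \<le> odd_part m * 2 ^ (m - R q)"
      using w n q by (intro occ_Bblock_le) (auto simp: R_def)
    also have "\<dots> \<le> odd_part m * 2 ^ 3"
      using q n by (intro mult_le_mono2 power_increasing) (auto simp: R_def)
    finally show "occ (case q of (m, i) \<Rightarrow> Bblock m i) (take (R q) w) + R q \<le> 8 * odd_part (fst q) + n"
      using q by (simp add: R_def)
  qed
  also have "\<dots> = (\<Sum>m \<leftarrow> [1..<Suc n]. 2 ^ two_exp m * (8 * odd_part m + n))"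
    unfolding qs_def by (simp add: map_concat sum_list_concat comp_def sum_list_triv)
  also have "\<dots> = (\<Sum>m \<leftarrow> [1..<Suc n]. 8 * m + n * 2 ^ two_exp m)"
    by (rule arg_cong[where f = sum_list], rule map_cong)
      (auto simp: algebra_simps pow_two_exp_mult_odd_part[simplified mult.commute])
  also have "\<dots> \<le> (\<Sum>m \<leftarrow> [1..<Suc n]. 8 * n + n * 2 ^ two_exp m)"
    by (rule sum_list_mono) auto
  also have "\<dots> = n * (8 * n) + n * two_part_sum n"
    unfolding two_part_sum_def sum_list_addf sum_list_const_mult
    by (simp add: sum_list_triv interv_sum_list_conv_sum_set_nat atLeastLessThanSuc_atLeastAtMost
        del: upt_Suc)
  finally show ?thesis by (simp add: algebra_simps)
qed

lemma two_part_sum_Suc: "two_part_sum (Suc n) = two_part_sum n + 2 ^ two_exp (Suc n)"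
  unfolding two_part_sum_def by simp

text \<open>The odd numbers up to \<open>2 K\<close> contribute \<open>K\<close>; the even ones \<open>2 m\<close> contribute twice as
  much as the \<open>m \<le> K\<close>.\<close>
lemma two_part_sum_double: "two_part_sum (2 * K) = K + 2 * two_part_sum K"
proof (induction K)
  case (Suc K)
  have "two_exp (Suc (2 * K)) = 0" by (rule two_exp_odd) simp
  moreover have "two_exp (2 * Suc K) = Suc (two_exp (Suc K))" by (rule two_exp_double) simp
  moreover have "2 * Suc K = Suc (Suc (2 * K))" by simp
  ultimately show ?case using Suc.IH by (simp add: two_part_sum_Suc)
qed (simp add: two_part_sum_def)

lemma two_part_sum_le: "1 \<le> n \<Longrightarrow> real (two_part_sum n) \<le> real n * (log 2 (real n) + 1)"
proof (induction n rule: less_induct)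
  case (less n)
  show ?case
  proof (cases "n = 1")
    case True
    then show ?thesis by (simp add: two_part_sum_def two_exp_odd)
  next
    case False
    obtain K where "n = 2 * K \<or> n = 2 * K + 1" by (metis evenE oddE)
    then have K: "n = 2 * K \<or> n = 2 * K + 1" "1 \<le> K" using less.prems False by auto
    have IH: "real (two_part_sum K) \<le> real K * (log 2 (real K) + 1)" using less.IH K by auto
    have log2: "log 2 (real (2 * K)) = log 2 (real K) + 1" using K by (simp add: log_mult)
    have "real (two_part_sum (2 * K)) = real K + 2 * real (two_part_sum K)"
      by (simp add: two_part_sum_double)
    also have "\<dots> \<le> real K + 2 * (real K * (log 2 (real K) + 1))" using IH by simp
    also have "\<dots> = real (2 * K) * (log 2 (real (2 * K)) + 1) - K" unfolding log2 by (simp add: algebra_simps)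
    finally have even: "real (two_part_sum (2 * K)) \<le> real (2 * K) * (log 2 (real (2 * K)) + 1) - K" .
    show ?thesis
    proof (cases "n = 2 * K")
      case False
      then have n: "n = Suc (2 * K)" using K by simp
      have l: "log 2 (real (2 * K)) \<le> log 2 (real n)" "0 \<le> log 2 (real n)" using n K by auto
      then have "real (2 * K) * log 2 (real (2 * K)) \<le> real (2 * K) * log 2 (real n)"
        by (intro mult_left_mono) auto
      moreover have "real n * (log 2 (real n) + 1) - 1 =
          real (2 * K) * log 2 (real n) + log 2 (real n) + real (2 * K)"
        using n by (simp add: algebra_simps)
      moreover have "real (2 * K) * (log 2 (real (2 * K)) + 1) =
          real (2 * K) * log 2 (real (2 * K)) + real (2 * K)"
        by (simp add: algebra_simps)
      ultimately have "real (2 * K) * (log 2 (real (2 * K)) + 1) \<le> real n * (log 2 (real n) + 1) - 1"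
        using l(2) by linarith
      then show ?thesis
        using even K n two_exp_odd[of "Suc (2 * K)"] by (simp add: two_part_sum_Suc)
    qed (use even in simp)
  qed
qed

definition occ_bound :: "nat \<Rightarrow> real" where
  "occ_bound n = 8 * real n ^ 2 + real n * (real n * (log 2 (real n) + 1))"

lemma occ_Sprefix_le_occ_bound:
  assumes "4 \<le> n" "length w = n - 3"
  shows "real (occ (Sprefix (Suc n)) w) \<le> occ_bound n"
proof -
  have "real (occ (Sprefix (Suc n)) w) \<le> 8 * real n ^ 2 + real n * real (two_part_sum n)"
    using occ_Sprefix_le[OF assms] by (simp add: power2_eq_square flip: of_nat_mult of_nat_add)
  also have "\<dots> \<le> occ_bound n"
    unfolding occ_bound_def using two_part_sum_le[of n] assms by (intro add_left_mono mult_left_mono) auto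
  finally show ?thesis .
qed

lemma eventually_occ_bound_le: "\<forall>\<^sub>F n in sequentially. (occ_bound n + 2) ^ 2 \<le> real n ^ 5"
  unfolding occ_bound_def by real_asymp

section \<open>The cost of the bad zone\<close>

lemma occ_bound_nonneg: "1 \<le> n \<Longrightarrow> 0 \<le> occ_bound n"
  unfolding occ_bound_def by simp

lemma ppm_cost_bad_zone_le:
  assumes n: "5 \<le> n" and A: "(occ_bound n + 2) ^ 2 \<le> real n ^ 5"
    and k: "Soff n \<le> k" "k < Soff n + 2 ^ n + 2 * n"
  shows "ppm_cost (map Sseq [0..<k]) (Sseq k) \<le> log 2 (real n ^ 5)"
proof -
  let ?x = "take k (Sprefix (Suc n))"
  have "(4::nat) \<le> 2 ^ n" using power_increasing[of 2 n "2::nat"] n by simp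
  then have "(n - 1) * 4 \<le> (n - 1) * 2 ^ n" by simp
  then have "2 ^ n + 2 * n \<le> 2 ^ n + (n - 1) * 2 ^ n" using n by linarith
  also have "\<dots> = n * 2 ^ n" using n by (cases n) auto
  finally have "2 ^ n + 2 * n \<le> n * 2 ^ n" .
  then have kS: "k \<le> length (Sprefix (Suc n))"
    using k n length_Sprefix_Suc[of n] unfolding Soff_eq_length_Sprefix by simp
  have "n - 1 \<le> Soff n" unfolding Soff_eq_length_Sprefix using length_Sprefix_ge[of "n - 1"] n by simp
  then have "length (suffix_of_len ?x (n - 3)) = n - 3" using k kS by (intro length_suffix_of_len) auto
  then have "real (occ (Sprefix (Suc n)) (suffix_of_len ?x (n - 3))) \<le> occ_bound n"
    using n by (intro occ_Sprefix_le_occ_bound) auto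
  moreover have "occ ?x (suffix_of_len ?x (n - 3)) \<le> occ (Sprefix (Suc n)) (suffix_of_len ?x (n - 3))"
    by (rule occ_take_le)
  moreover have "n - 2 - 1 = n - 3" by simp
  ultimately have "real (occ ?x (suffix_of_len ?x (n - 2 - 1))) \<le> occ_bound n" by simp
  then have "ppm_cost ?x (Sseq k) \<le> 2 * log 2 (occ_bound n + 2)"
    using n bad_zone_all_words_followed[OF n k(1) kS] by (intro ppm_cost_le[of "n - 2"]) auto
  also have "\<dots> = log 2 ((occ_bound n + 2) ^ 2)"
    using occ_bound_nonneg[of n] n by (simp add: log_nat_power)
  also have "\<dots> \<le> log 2 (real n ^ 5)"
    using A occ_bound_nonneg[of n] n by (intro log_mono) auto
  finally show ?thesis using map_Sseq_upt[OF kS] by simp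
qed

theorem corollary1:
  shows "\<forall>\<^sub>F n in sequentially.
           (\<Sum>k \<in> {Soff n..<Soff n + 2 ^ n + 2 * n}. ppm_cost (map Sseq [0..<k]) (Sseq k))
             \<le> real (2 ^ n + 2 * n) * log 2 (real n ^ 5)"
  using eventually_ge_at_top[of 5] eventually_occ_bound_le
proof eventually_elim
  case (elim n)
  have "(\<Sum>k \<in> {Soff n..<Soff n + 2 ^ n + 2 * n}. ppm_cost (map Sseq [0..<k]) (Sseq k))
      \<le> real (card {Soff n..<Soff n + 2 ^ n + 2 * n}) * log 2 (real n ^ 5)"
    by (rule sum_bounded_above) (use ppm_cost_bad_zone_le elim in auto)
  then show ?case by simp
qed

end
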